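(* There exist two disjoint visibly pushdown alphabets $\widetilde{\Sigma}_1,\widetilde{\Sigma}_2$ and well-matched visibly pushdown languages $P_1\subseteq\widetilde{\Sigma}_1^*$, $P_2\subseteq\widetilde{\Sigma}_2^*$ such that the set of minimal reductions of $P_1\parallel P_2$ under the commutativity relation $\mathbb{I}$ is not countable.
   Context: A visibly pushdown (VP) alphabet $\widetilde{\Sigma}$ is a finite alphabet partitioned into calls $\Sigma^{\mathsf{call}}$, returns $\Sigma^{\mathsf{ret}}$ and internals $\Sigma^{\mathsf{int}}$. In a word over $\widetilde{\Sigma}$, calls and returns are matched like opening and closing parentheses (internals are ignored); unmatched calls (returns) are pending; a word is well-matched if it has no pending calls or returns. A visibly pushdown language (VPL) is a language accepted by a visibly pushdown automaton (a pushdown automaton that pushes exactly one stack symbol on reading a call, pops exactly one on reading a return, and does not touch the stack on an internal). For $\widetilde{\Sigma}=\widetilde{\Sigma}_1\uplus\widetilde{\Sigma}_2$ and $L_i\subseteq\widetilde{\Sigma}_i^*$, the shuffle is $L_1\parallel L_2=\{w\in\widetilde{\Sigma}^*:\Pi_{\widetilde{\Sigma}_i}(w)\in L_i \text{ for } i=1,2\}$, where $\Pi_{\widetilde{\Sigma}_i}$ erases letters not in $\widetilde{\Sigma}_i$. Let $\mathbb{I}=\{(a,b): a\in\widetilde{\Sigma}_i,\ b\in\widetilde{\Sigma}_j,\ i\neq j\}$ and let $\equiv_{\mathbb{I}}$ be the least reflexive transitive relation on $\widetilde{\Sigma}^*$ with $uabv\equiv_{\mathbb{I}}ubav$ whenever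 $(a,b)\in\mathbb{I}$. For a language $L$, a subset $\widehat{L}\subseteq L$ is a reduction if every $\rho\in L$ has some $\sigma\in\widehat{L}$ with $\sigma\equiv_{\mathbb{I}}\rho$; it is minimal if there is exactly one such $\sigma$ for every $\rho$. *)

theory Defs
  imports Main "HOL-Library.Countable_Set"
begin

record vp_alphabet =
  calls :: "nat set"
  rets  :: "nat set"
  ints  :: "nat set"

definition alph :: "vp_alphabet \<Rightarrow> nat set" where
  "alph S = calls S \<union> rets S \<union> ints S"

definition vp_alphabet_wf :: "vp_alphabet \<Rightarrow> bool" where
  "vp_alphabet_wf S \<longleftrightarrow> finite (alph S) \<and>
     calls S \<inter> rets S = {} \<and> calls S \<inter> ints S = {} \<and> rets S \<inter> ints S = {}"

definition vp_union :: "vp_alphabet \<Rightarrow> vp_alphabet \<Rightarrow> vp_alphabet" where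
  "vp_union S1 S2 = \<lparr> calls = calls S1 \<union> calls S2, rets = rets S1 \<union> rets S2,
                       ints = ints S1 \<union> ints S2 \<rparr>"

definition cnt :: "nat set \<Rightarrow> nat list \<Rightarrow> nat" where
  "cnt A w = length (filter (\<lambda>x. x \<in> A) w)"

text \<open>No pending returns (every prefix has at least as many calls as returns)
and no pending calls (equal total numbers).\<close>
definition well_matched :: "vp_alphabet \<Rightarrow> nat list \<Rightarrow> bool" where
  "well_matched S w \<longleftrightarrow>
     (\<forall>k \<le> length w. cnt (rets S) (take k w) \<le> cnt (calls S) (take k w)) \<and>
     cnt (rets S) w = cnt (calls S) w"

text \<open>States and stack symbols are natural numbers; the transition relations,
initial and final states are finite sets (hence finitely many states and stack
symbols are used). A return on the empty stack reads the bottom symbol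
(encoded as None) and leaves the stack empty.\<close>

record vpa =
  v_init  :: "nat set"
  v_final :: "nat set"
  d_call  :: "(nat \<times> nat \<times> nat \<times> nat) set"          \<comment> \<open>(q, c, q', pushed)\<close>
  d_ret   :: "(nat \<times> nat \<times> nat option \<times> nat) set"   \<comment> \<open>(q, r, popped, q')\<close>
  d_int   :: "(nat \<times> nat \<times> nat) set"

definition vpa_finite :: "vpa \<Rightarrow> bool" where
  "vpa_finite A \<longleftrightarrow> finite (v_init A) \<and> finite (v_final A) \<and>
     finite (d_call A) \<and> finite (d_ret A) \<and> finite (d_int A)"

inductive vpa_run :: "vp_alphabet \<Rightarrow> vpa \<Rightarrow> nat \<Rightarrow> nat list \<Rightarrow> nat list \<Rightarrow> nat \<Rightarrow> nat list \<Rightarrow> bool"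
  for S A where
  run_nil: "vpa_run S A q st [] q st"
| run_call: "\<lbrakk> c \<in> calls S; (q, c, q', g) \<in> d_call A; vpa_run S A q' (g # st) w q'' st'' \<rbrakk>
      \<Longrightarrow> vpa_run S A q st (c # w) q'' st''"
| run_ret: "\<lbrakk> r \<in> rets S; (q, r, Some g, q') \<in> d_ret A; vpa_run S A q' st w q'' st'' \<rbrakk>
      \<Longrightarrow> vpa_run S A q (g # st) (r # w) q'' st''"
| run_ret_bot: "\<lbrakk> r \<in> rets S; (q, r, None, q') \<in> d_ret A; vpa_run S A q' [] w q'' st'' \<rbrakk>
      \<Longrightarrow> vpa_run S A q [] (r # w) q'' st''"
| run_int: "\<lbrakk> i \<in> ints S; (q, i, q') \<in> d_int A; vpa_run S A q' st w q'' st'' \<rbrakk>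
      \<Longrightarrow> vpa_run S A q st (i # w) q'' st''"

definition vpa_lang :: "vp_alphabet \<Rightarrow> vpa \<Rightarrow> nat list set" where
  "vpa_lang S A = {w. w \<in> lists (alph S) \<and>
     (\<exists>q0 qf st. q0 \<in> v_init A \<and> qf \<in> v_final A \<and> vpa_run S A q0 [] w qf st)}"

definition is_VPL :: "vp_alphabet \<Rightarrow> nat list set \<Rightarrow> bool" where
  "is_VPL S L \<longleftrightarrow> (\<exists>A. vpa_finite A \<and> L = vpa_lang S A)"

definition well_matched_VPL :: "vp_alphabet \<Rightarrow> nat list set \<Rightarrow> bool" where
  "well_matched_VPL S L \<longleftrightarrow> is_VPL S L \<and> (\<forall>w\<in>L. well_matched S w)"

definition shuffle :: "vp_alphabet \<Rightarrow> vp_alphabet \<Rightarrow> nat list set \<Rightarrow> nat list set \<Rightarrow> nat list set" where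
  "shuffle S1 S2 L1 L2 = {w. w \<in> lists (alph S1 \<union> alph S2) \<and>
      filter (\<lambda>x. x \<in> alph S1) w \<in> L1 \<and> filter (\<lambda>x. x \<in> alph S2) w \<in> L2}"

definition indep :: "vp_alphabet \<Rightarrow> vp_alphabet \<Rightarrow> (nat \<times> nat) set" where
  "indep S1 S2 = (alph S1 \<times> alph S2) \<union> (alph S2 \<times> alph S1)"

inductive swap_step :: "(nat \<times> nat) set \<Rightarrow> nat list \<Rightarrow> nat list \<Rightarrow> bool" for I where
  "(a, b) \<in> I \<Longrightarrow> swap_step I (u @ a # b # v) (u @ b # a # v)"

definition trace_equiv :: "(nat \<times> nat) set \<Rightarrow> nat list \<Rightarrow> nat list \<Rightarrow> bool" where
  "trace_equiv I = (swap_step I)\<^sup>*\<^sup>*"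

definition is_reduction :: "(nat \<times> nat) set \<Rightarrow> nat list set \<Rightarrow> nat list set \<Rightarrow> bool" where
  "is_reduction I L R \<longleftrightarrow> R \<subseteq> L \<and> (\<forall>\<rho>\<in>L. \<exists>\<sigma>\<in>R. trace_equiv I \<sigma> \<rho>)"

definition is_minimal_reduction :: "(nat \<times> nat) set \<Rightarrow> nat list set \<Rightarrow> nat list set \<Rightarrow> bool" where
  "is_minimal_reduction I L R \<longleftrightarrow> is_reduction I L R \<and> (\<forall>\<rho>\<in>L. \<exists>!\<sigma>. \<sigma> \<in> R \<and> trace_equiv I \<sigma> \<rho>)"

end

theory Submission
  imports Defs
begin

text \<open>Take \<open>P\<^sub>1 = a\<^sup>*\<close> and \<open>P\<^sub>2 = b\<^sup>*\<close> over two alphabets consisting of one internal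
letter each. The shuffle is \<open>{a, b}\<^sup>*\<close>, and since \<open>a\<close> and \<open>b\<close> commute, two words are
equivalent iff they have the same numbers of \<open>a\<close>'s and \<open>b\<close>'s, so a minimal reduction is
a choice of one word per pair of counts. The class with counts \<open>(k + 1, 1)\<close> contains the
distinct words \<open>a\<^sup>k\<^sup>+\<^sup>1 b\<close> and \<open>b a\<^sup>k\<^sup>+\<^sup>1\<close>; choosing \<open>b a\<^sup>k\<^sup>+\<^sup>1\<close> exactly for \<open>k \<in> X\<close> gives a
different minimal reduction for every set \<open>X\<close> of naturals, and there are uncountably many
such \<open>X\<close>.\<close>

definition internal_alphabet :: "nat set \<Rightarrow> vp_alphabet" where
  "internal_alphabet A = \<lparr> calls = {}, rets = {}, ints = A \<rparr>"

definition universal_vpa :: "nat set \<Rightarrow> vpa" where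
  "universal_vpa A = \<lparr> v_init = {0}, v_final = {0}, d_call = {}, d_ret = {},
     d_int = (\<lambda>x. (0, x, 0)) ` A \<rparr>"

lemma alph_internal_alphabet [simp]: "alph (internal_alphabet A) = A"
  by (simp add: alph_def internal_alphabet_def)

lemma vp_alphabet_wf_internal_alphabet: "finite A \<Longrightarrow> vp_alphabet_wf (internal_alphabet A)"
  by (simp add: vp_alphabet_wf_def alph_def internal_alphabet_def)

lemma vpa_run_universal_vpa:
  "w \<in> lists A \<Longrightarrow> vpa_run (internal_alphabet A) (universal_vpa A) 0 [] w 0 []"
proof (induction w)
  case Nil
  show ?case by (rule run_nil)
next
  case (Cons x w)
  then show ?case
    by (intro run_int[where q' = 0]) (auto simp: internal_alphabet_def universal_vpa_def)
qed

lemma vpa_lang_universal_vpa: "vpa_lang (internal_alphabet A) (universal_vpa A) = lists A"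
  using vpa_run_universal_vpa by (auto simp: vpa_lang_def universal_vpa_def)

lemma well_matched_VPL_lists_internal:
  assumes "finite A"
  shows "well_matched_VPL (internal_alphabet A) (lists A)"
proof -
  have "vpa_finite (universal_vpa A)"
    using assms by (simp add: vpa_finite_def universal_vpa_def)
  then have "is_VPL (internal_alphabet A) (lists A)"
    unfolding is_VPL_def using vpa_lang_universal_vpa by metis
  moreover have "well_matched (internal_alphabet A) w" for w
    by (simp add: well_matched_def cnt_def internal_alphabet_def)
  ultimately show ?thesis
    by (simp add: well_matched_VPL_def)
qed

lemma shuffle_lists_internal:
  "shuffle (internal_alphabet A) (internal_alphabet B) (lists A) (lists B) = lists (A \<union> B)"
  by (auto simp: shuffle_def)

lemma sym_indep: "sym (indep S1 S2)"
  by (auto simp: indep_def sym_def)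

lemma trace_equiv_refl [simp]: "trace_equiv I w w"
  by (simp add: trace_equiv_def)

lemma trace_equiv_trans: "trace_equiv I u v \<Longrightarrow> trace_equiv I v w \<Longrightarrow> trace_equiv I u w"
  unfolding trace_equiv_def by (rule rtranclp_trans)

lemma trace_equiv_swap: "(b, a) \<in> I \<Longrightarrow> trace_equiv I (b # a # v) (a # b # v)"
  using swap_step.intros[of b a I "[]" v] by (simp add: trace_equiv_def)

lemma swap_step_append_left: "swap_step I u v \<Longrightarrow> swap_step I (p @ u) (p @ v)"
proof (induction rule: swap_step.induct)
  case (1 a b u v)
  then show ?case using swap_step.intros[of a b I "p @ u" v] by simp
qed

lemma trace_equiv_append_left: "trace_equiv I u v \<Longrightarrow> trace_equiv I (p @ u) (p @ v)"
  unfolding trace_equiv_def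
  by (induction rule: rtranclp_induct) (auto intro: rtranclp.rtrancl_into_rtrancl swap_step_append_left)

lemma trace_equiv_Cons: "trace_equiv I u v \<Longrightarrow> trace_equiv I (x # u) (x # v)"
  using trace_equiv_append_left[of I u v "[x]"] by simp

lemma swap_step_sym:
  assumes "sym I" and "swap_step I u v"
  shows "swap_step I v u"
  using assms(2) by induction (auto intro: swap_step.intros symD[OF assms(1)])

lemma trace_equiv_sym:
  assumes "sym I" and "trace_equiv I u v"
  shows "trace_equiv I v u"
  using assms(2) unfolding trace_equiv_def
proof (induction rule: rtranclp_induct)
  case base
  show ?case by simp
next
  case (step v w)
  then show ?case
    by (metis assms(1) converse_rtranclp_into_rtranclp swap_step_sym)
qed

lemma swap_step_count_list: "swap_step I u v \<Longrightarrow> count_list u x = count_list v x"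
  by (induction rule: swap_step.induct) auto

lemma trace_equiv_count_list: "trace_equiv I u v \<Longrightarrow> count_list u x = count_list v x"
  unfolding trace_equiv_def
  by (induction rule: rtranclp_induct) (simp_all add: swap_step_count_list)

lemma count_list_replicate [simp]: "count_list (replicate n x) y = (if x = y then n else 0)"
  by (induction n) auto

definition letter_counts :: "nat \<Rightarrow> nat \<Rightarrow> nat list \<Rightarrow> nat \<times> nat" where
  "letter_counts a b w = (count_list w a, count_list w b)"

lemma trace_equiv_Cons_replicate:
  assumes "(b, a) \<in> I"
  shows "trace_equiv I (b # replicate n a @ v) (replicate n a @ b # v)"
proof (induction n)
  case 0
  show ?case by simp
next
  case (Suc n)
  have "trace_equiv I (b # a # replicate n a @ v) (a # b # replicate n a @ v)"
    using assms by (rule trace_equiv_swap)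
  moreover have "trace_equiv I (a # b # replicate n a @ v) (a # replicate n a @ b # v)"
    using Suc.IH by (rule trace_equiv_Cons)
  ultimately have "trace_equiv I (b # a # replicate n a @ v) (a # replicate n a @ b # v)"
    by (rule trace_equiv_trans)
  then show ?case
    by simp
qed

lemma trace_equiv_sort:
  assumes "(b, a) \<in> I" and "a \<noteq> b" and "w \<in> lists {a, b}"
  shows "trace_equiv I w (replicate (count_list w a) a @ replicate (count_list w b) b)"
  using assms(3)
proof (induction rule: lists.induct)
  case Nil
  show ?case by simp
next
  case (Cons x w)
  then have IH: "trace_equiv I (x # w) (x # replicate (count_list w a) a @ replicate (count_list w b) b)"
    by (simp add: trace_equiv_Cons)
  from \<open>x \<in> {a, b}\<close> consider "x = a" | "x = b"
    by blast
  then show ?case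
  proof cases
    case 1
    with IH assms(2) show ?thesis by simp
  next
    case 2
    have "trace_equiv I (b # replicate (count_list w a) a @ replicate (count_list w b) b)
        (replicate (count_list w a) a @ b # replicate (count_list w b) b)"
      using assms(1) by (rule trace_equiv_Cons_replicate)
    from trace_equiv_trans[OF IH[unfolded 2] this] 2 assms(2) show ?thesis
      by simp
  qed
qed

lemma trace_equiv_iff_letter_counts:
  assumes "sym I" and "(a, b) \<in> I" and "a \<noteq> b" and "u \<in> lists {a, b}" and "v \<in> lists {a, b}"
  shows "trace_equiv I u v \<longleftrightarrow> letter_counts a b u = letter_counts a b v"
proof
  assume "trace_equiv I u v"
  then show "letter_counts a b u = letter_counts a b v"
    by (simp add: letter_counts_def trace_equiv_count_list)
next
  assume counts: "letter_counts a b u = letter_counts a b v"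
  have "(b, a) \<in> I"
    using assms(1,2) by (rule symD)
  define w\<^sub>0 where "w\<^sub>0 = replicate (count_list u a) a @ replicate (count_list u b) b"
  have "trace_equiv I u w\<^sub>0"
    unfolding w\<^sub>0_def using \<open>(b, a) \<in> I\<close> assms(3,4) by (rule trace_equiv_sort)
  moreover have "trace_equiv I v w\<^sub>0"
    using trace_equiv_sort[OF \<open>(b, a) \<in> I\<close> assms(3,5)] counts
    by (simp add: w\<^sub>0_def letter_counts_def)
  with assms(1) have "trace_equiv I w\<^sub>0 v"
    by (rule trace_equiv_sym)
  ultimately show "trace_equiv I u v"
    by (rule trace_equiv_trans)
qed

lemma is_minimal_reduction_of_section:
  assumes equiv_iff: "\<And>u v. u \<in> L \<Longrightarrow> v \<in> L \<Longrightarrow> trace_equiv I u v \<longleftrightarrow> \<kappa> u = \<kappa> v"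
    and rep_in: "\<And>w. w \<in> L \<Longrightarrow> s (\<kappa> w) \<in> L"
    and key_rep: "\<And>w. w \<in> L \<Longrightarrow> \<kappa> (s (\<kappa> w)) = \<kappa> w"
  shows "is_minimal_reduction I L (s ` \<kappa> ` L)"
  unfolding is_minimal_reduction_def is_reduction_def
proof (intro conjI ballI)
  show "s ` \<kappa> ` L \<subseteq> L"
    using rep_in by blast
  fix w
  assume w: "w \<in> L"
  have "trace_equiv I (s (\<kappa> w)) w"
    using equiv_iff[OF rep_in[OF w] w] key_rep[OF w] by simp
  then have rep: "s (\<kappa> w) \<in> s ` \<kappa> ` L \<and> trace_equiv I (s (\<kappa> w)) w"
    using w by blast
  then show "\<exists>r \<in> s ` \<kappa> ` L. trace_equiv I r w"
    by blast
  have unique: "r = s (\<kappa> w)" if "r \<in> s ` \<kappa> ` L" and "trace_equiv I r w" for r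
  proof -
    from that(1) obtain v where v: "v \<in> L" and r: "r = s (\<kappa> v)"
      by blast
    have "\<kappa> v = \<kappa> r"
      using key_rep[OF v] r by simp
    also have "\<kappa> r = \<kappa> w"
      using equiv_iff[OF _ w] rep_in[OF v] r that(2) by simp
    finally show ?thesis
      using r by simp
  qed
  show "\<exists>!r. r \<in> s ` \<kappa> ` L \<and> trace_equiv I r w"
    using rep unique by (intro ex1I) auto
qed

definition chosen_rep :: "nat \<Rightarrow> nat \<Rightarrow> nat set \<Rightarrow> nat \<times> nat \<Rightarrow> nat list" where
  "chosen_rep a b X = (\<lambda>(n, m).
     if m = 1 \<and> n \<in> Suc ` X then b # replicate n a else replicate n a @ replicate m b)"

lemma chosen_rep_in_lists: "chosen_rep a b X nm \<in> lists {a, b}"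
  by (auto simp: chosen_rep_def split: prod.splits)

lemma letter_counts_chosen_rep: "a \<noteq> b \<Longrightarrow> letter_counts a b (chosen_rep a b X nm) = nm"
  by (auto simp: chosen_rep_def letter_counts_def split: prod.splits)

lemma chosen_rep_Suc_1:
  "chosen_rep a b X (Suc k, 1) = (if k \<in> X then b # replicate (Suc k) a else replicate (Suc k) a @ [b])"
  by (simp add: chosen_rep_def image_iff)

lemma letter_counts_surj:
  assumes "a \<noteq> b"
  shows "letter_counts a b ` lists {a, b} = UNIV"
proof -
  have "nm \<in> letter_counts a b ` lists {a, b}" for nm
    using letter_counts_chosen_rep[OF assms, of "{}" nm, symmetric] chosen_rep_in_lists
    by (rule image_eqI)
  then show ?thesis
    by blast
qed

lemma is_minimal_reduction_chosen_rep:
  assumes "sym I" and "(a, b) \<in> I" and "a \<noteq> b"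
  shows "is_minimal_reduction I (lists {a, b}) (range (chosen_rep a b X))"
proof -
  have "is_minimal_reduction I (lists {a, b}) (chosen_rep a b X ` letter_counts a b ` lists {a, b})"
  proof (rule is_minimal_reduction_of_section)
    show "trace_equiv I u v \<longleftrightarrow> letter_counts a b u = letter_counts a b v"
      if "u \<in> lists {a, b}" and "v \<in> lists {a, b}" for u v
      using assms that by (rule trace_equiv_iff_letter_counts)
    show "chosen_rep a b X (letter_counts a b w) \<in> lists {a, b}" for w
      by (rule chosen_rep_in_lists)
    show "letter_counts a b (chosen_rep a b X (letter_counts a b w)) = letter_counts a b w" for w
      using assms(3) by (rule letter_counts_chosen_rep)
  qed
  then show ?thesis
    using assms(3) by (simp add: letter_counts_surj)
qed

lemma inj_range_chosen_rep:
  assumes "a \<noteq> b"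
  shows "inj (\<lambda>X. range (chosen_rep a b X))"
proof (rule injI, rule set_eqI)
  fix X Y k
  assume "range (chosen_rep a b X) = range (chosen_rep a b Y)"
  then have "chosen_rep a b X (Suc k, 1) \<in> range (chosen_rep a b Y)"
    by (metis rangeI)
  then obtain nm where nm: "chosen_rep a b X (Suc k, 1) = chosen_rep a b Y nm"
    by blast
  have "nm = (Suc k, 1)"
    using arg_cong[OF nm, of "letter_counts a b"] by (simp add: letter_counts_chosen_rep[OF assms])
  with nm have "chosen_rep a b X (Suc k, 1) = chosen_rep a b Y (Suc k, 1)"
    by simp
  moreover have "b # replicate (Suc k) a \<noteq> replicate (Suc k) a @ [b]"
    using assms by simp
  ultimately show "k \<in> X \<longleftrightarrow> k \<in> Y"
    unfolding chosen_rep_Suc_1 by (cases "k \<in> X"; cases "k \<in> Y") simp_all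
qed

lemma uncountable_UNIV_nat_set: "\<not> countable (UNIV :: nat set set)"
  using Cantors_theorem[of "UNIV :: nat set"] by (auto simp: uncountable_def)

theorem proposition3p2:
  shows "\<exists>S1 S2 P1 P2.
     vp_alphabet_wf S1 \<and> vp_alphabet_wf S2 \<and> alph S1 \<inter> alph S2 = {} \<and>
     well_matched_VPL S1 P1 \<and> well_matched_VPL S2 P2 \<and>
     \<not> countable {R. is_minimal_reduction (indep S1 S2) (shuffle S1 S2 P1 P2) R}"
proof (intro exI conjI)
  let ?S1 = "internal_alphabet {0}" and ?S2 = "internal_alphabet {1}"
  show "vp_alphabet_wf ?S1" "vp_alphabet_wf ?S2"
    by (simp_all add: vp_alphabet_wf_internal_alphabet)
  show "alph ?S1 \<inter> alph ?S2 = {}"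
    by simp
  show "well_matched_VPL ?S1 (lists {0})" "well_matched_VPL ?S2 (lists {1})"
    by (simp_all add: well_matched_VPL_lists_internal)
  have "(0, 1) \<in> indep ?S1 ?S2"
    by (simp add: indep_def)
  then have "is_minimal_reduction (indep ?S1 ?S2) (lists {0, 1}) (range (chosen_rep 0 1 X))" for X
    by (rule is_minimal_reduction_chosen_rep[OF sym_indep _ zero_neq_one])
  moreover have "shuffle ?S1 ?S2 (lists {0}) (lists {1}) = lists {0, 1}"
    using shuffle_lists_internal[of "{0}" "{1}"] by (simp add: insert_commute)
  ultimately have reductions: "range (\<lambda>X. range (chosen_rep 0 1 X))
      \<subseteq> {R. is_minimal_reduction (indep ?S1 ?S2) (shuffle ?S1 ?S2 (lists {0}) (lists {1})) R}"
    by (simp add: image_subset_iff)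
  have "\<not> countable (range (\<lambda>X. range (chosen_rep 0 1 X)))"
    using countable_image_inj_eq[OF inj_range_chosen_rep[OF zero_neq_one]] uncountable_UNIV_nat_set
    by simp
  then show "\<not> countable
      {R. is_minimal_reduction (indep ?S1 ?S2) (shuffle ?S1 ?S2 (lists {0}) (lists {1})) R}"
    using countable_subset[OF reductions] by blast
qed

end
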